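(* Consider the PSSG described in the context in the FULL-FULL scenario: $k_1\mu_1>2L\lambda$ and $k_2\mu_2>2L\lambda$. Define $$\theta^L_2=-\frac{k_q q_1(2L)+k_l(x_2-x_1)}{k_p d},\qquad \theta^R_2=\frac{k_q q_2(2L)+k_l(x_2-x_1)}{k_p d}.$$ If $p_1-p_2\in[\theta^R_2,\,p_{\max}-p_{\min}]$, then at the Nash equilibrium of the PSSG every PEV selects station 2. If $p_1-p_2\in[p_{\min}-p_{\max},\,\theta^L_2]$, then at the Nash equilibrium of the PSSG every PEV selects station 1.
   Context: The system is the segment $[-L,L]$ ($L>0$) with two charging stations located at $x_1<x_2$, $-L<x_1<x_2<L$. Station $i\in\{1,2\}$ has $k_i\ge 1$ (integer) identical charging ports, PEV service times with mean $1/\mu_i$ ($\mu_i>0$) and variance $\sigma_i^2$, and announces a price $p_i\in[p_{\min},p_{\max}]$. A continuum of PEVs is uniformly distributed on $[-L,L]$, generating charging requests at rate $\lambda>0$ per unit length. Each PEV at location $x$ selects station 1 or 2, possibly at random; a strategy profile is described by the probability $\omega(x)\in[0,1]$ that the PEV at $x$ selects station 1. Let $a_1=\int_{-L}^{L}\omega(x)\,dx$ and $a_2=2L-a_1$. For $0\le a<k_i\mu_i/\lambda$, $$q_i(a)=\frac{a\lambda\,(\sigma_i^2+\frac{1}{\mu_i^2})\,\rho^{k_i-1}}{2(k_i-1)!\,(k_i-\rho)^2\Big[\sum_{m=0}^{k_i-1}\frac{\rho^m}{m!}+\frac{\rho^{k_i}}{(k_i-1)!(k_i-\rho)}\Big]},\qquad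 \rho=\frac{a\lambda}{\mu_i},$$ is the mean waiting time at station $i$, and $q_i(a)=+\infty$ if $a\ge k_i\mu_i/\lambda$. Given $a_1,a_2$ (which a single PEV cannot change), a PEV at $x$ selecting station $i$ gets payoff $U(i;x)=-k_l|x-x_i|-k_q\,q_i(a_i)-k_p\,d\,p_i$, with constants $k_l,k_q,k_p,d>0$; a randomized choice yields the expected payoff. A Nash equilibrium of the PSSG is a profile in which every PEV's (possibly mixed) choice maximizes its expected payoff given $a_1,a_2$. *)

theory Defs
  imports "HOL-Analysis.Analysis"
begin

text \<open>Mean waiting time formula at a station with k ports, service rate mu,
  service-time variance s2, request rate lam per unit length, attraction length a
  (only meaningful for a < k*mu/lam).\<close>
definition qform :: "nat \<Rightarrow> real \<Rightarrow> real \<Rightarrow> real \<Rightarrow> real \<Rightarrow> real" where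
  "qform k mu s2 lam a =
     (let rho = a * lam / mu in
      a * lam * (s2 + 1 / mu^2) * rho ^ (k - 1) /
      (2 * fact (k - 1) * (real k - rho)^2 *
        ((\<Sum>m<k. rho ^ m / fact m) + rho ^ k / (fact (k - 1) * (real k - rho)))))"

definition qwait :: "nat \<Rightarrow> real \<Rightarrow> real \<Rightarrow> real \<Rightarrow> real \<Rightarrow> ereal" where
  "qwait k mu s2 lam a = (if a < real k * mu / lam then ereal (qform k mu s2 lam a) else \<infinity>)"

definition payoff :: "real \<Rightarrow> real \<Rightarrow> real \<Rightarrow> real \<Rightarrow> real \<Rightarrow> ereal \<Rightarrow> real \<Rightarrow> real \<Rightarrow> ereal" where
  "payoff kl kq kp d xi qi pri x = ereal (- kl * \<bar>x - xi\<bar> - kp * d * pri) - ereal kq * qi"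

text \<open>Nash equilibrium of the PSSG: omega x is the probability that the PEV at x
  selects station 1; every PEV's mixed choice maximizes its expected payoff given a1, a2.\<close>
definition is_NE ::
  "real \<Rightarrow> real \<Rightarrow> real \<Rightarrow> real \<Rightarrow>
   nat \<Rightarrow> real \<Rightarrow> real \<Rightarrow> real \<Rightarrow>
   nat \<Rightarrow> real \<Rightarrow> real \<Rightarrow> real \<Rightarrow>
   real \<Rightarrow> real \<Rightarrow> real \<Rightarrow> real \<Rightarrow> (real \<Rightarrow> real) \<Rightarrow> bool" where
  "is_NE L lam x1 x2 k1 mu1 s1 p1 k2 mu2 s2 p2 kl kq kp d \<omega> \<longleftrightarrow>
     set_integrable lborel {-L..L} \<omega> \<and>
     (let a1 = (LINT x:{-L..L}|lborel. \<omega> x);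
          a2 = 2 * L - a1;
          Q1 = qwait k1 mu1 s1 lam a1;
          Q2 = qwait k2 mu2 s2 lam a2
      in \<forall>x\<in>{-L..L}. 0 \<le> \<omega> x \<and> \<omega> x \<le> 1 \<and>
           (let U1 = payoff kl kq kp d x1 Q1 p1 x;
                U2 = payoff kl kq kp d x2 Q2 p2 x
            in \<forall>w\<in>{0..1::real}.
                 ereal w * U1 + ereal (1 - w) * U2 \<le> ereal (\<omega> x) * U1 + ereal (1 - \<omega> x) * U2))"

end

theory Submission
  imports Defs
begin

text \<open>In the full-full regime every load lies in [0, 2L], so both waiting times are finite; the
  waiting time increases with the load and is positive for a positive load. If station 1 kept a
  load a1 > 0 at an equilibrium, the price gap would exceed the largest possible waiting time
  q2(2L) at station 2 plus the largest travel advantage kl (x2 - x1), while station 1 still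
  imposes the positive waiting time q1(a1). Every PEV would then strictly prefer station 2,
  forcing a1 = 0, i.e. almost every PEV chooses station 2. The second claim is the first one with
  the stations relabelled, which replaces \<omega> by 1 - \<omega>.\<close>

text \<open>Dividing numerator and denominator of \<^const>\<open>qform\<close> by \<open>\<rho>\<^sup>k\<close> leaves a constant over
  \<open>qdenom k \<rho>\<close>, a product of nonnegative factors that decrease in \<open>\<rho>\<close>; this is why the waiting
  time increases with the load.\<close>

definition qdenom :: "nat \<Rightarrow> real \<Rightarrow> real" where
  "qdenom k r = (real k - r) * (fact (k - 1) * (real k - r) * (\<Sum>m<k. 1 / (fact m * r ^ (k - m))) + 1)"

lemma qform_eq_div_qdenom:
  assumes "k \<ge> 1" "mu > 0" "lam > 0" "a > 0" "a * lam < real k * mu"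
  shows "qform k mu s lam a = mu * (s + 1 / mu^2) / (2 * qdenom k (a * lam / mu))"
proof -
  define r where "r = a * lam / mu"
  define S where "S = (\<Sum>m<k. r ^ m / fact m)"
  define F where "F = (fact (k - 1) :: real)"
  define D where "D = real k - r"
  define P where "P = r ^ k"
  have r: "r > 0" "r < real k"
    using assms by (simp_all add: r_def field_simps)
  have pow: "r ^ (k - 1) * r = r ^ k"
    using assms(1) by (metis Suc_diff_1 less_le_trans power_Suc2 zero_less_one)
  have sum: "(\<Sum>m<k. 1 / (fact m * r ^ (k - m))) = S / r ^ k"
    unfolding S_def sum_divide_distrib
  proof (rule sum.cong)
    fix m assume "m \<in> {..<k}"
    then have "r ^ k = r ^ m * r ^ (k - m)"
      by (simp add: power_add[symmetric])
    then show "1 / (fact m * r ^ (k - m)) = r ^ m / fact m / r ^ k"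
      using r by (simp add: field_simps)
  qed simp
  have pos: "F > 0" "S \<ge> 0" "P > 0" "D > 0"
    using r by (auto simp: F_def S_def P_def D_def intro: sum_nonneg)
  then have N: "F * D * S + P > 0"
    by (simp add: add_nonneg_pos)
  have "qform k mu s lam a = mu * (s + 1 / mu^2) * P / (2 * F * D^2 * (S + P / (F * D)))"
  proof -
    have "a * lam = mu * r"
      using assms(2) by (simp add: r_def)
    then show ?thesis
      unfolding qform_def Let_def r_def[symmetric] S_def[symmetric] F_def[symmetric]
        D_def[symmetric] P_def pow[symmetric]
      by (simp add: ac_simps)
  qed
  also have "2 * F * D^2 * (S + P / (F * D)) = 2 * D * (F * D * S + P)"
    using pos by (simp add: field_simps power2_eq_square)
  also have "mu * (s + 1 / mu^2) * P / (2 * D * (F * D * S + P))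
      = mu * (s + 1 / mu^2) / (2 * (D * (F * D * (S / P) + 1)))"
    using pos N by (simp add: field_simps)
  also have "\<dots> = mu * (s + 1 / mu^2) / (2 * qdenom k r)"
    by (simp add: qdenom_def sum F_def D_def P_def)
  finally show ?thesis by (simp add: r_def)
qed

lemma qdenom_pos:
  assumes "0 < r" "r < real k"
  shows "qdenom k r > 0"
  unfolding qdenom_def using assms
  by (intro mult_pos_pos add_nonneg_pos mult_nonneg_nonneg sum_nonneg) auto

lemma qdenom_antimono:
  assumes "0 < r" "r \<le> r'" "r' < real k"
  shows "qdenom k r' \<le> qdenom k r"
proof -
  have "(\<Sum>m<k. 1 / (fact m * r' ^ (k - m))) \<le> (\<Sum>m<k. 1 / (fact m * r ^ (k - m)))"
  proof (rule sum_mono)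
    fix m
    have "r ^ (k - m) \<le> r' ^ (k - m)"
      using assms by (intro power_mono) auto
    then show "1 / (fact m * r' ^ (k - m)) \<le> 1 / (fact m * r ^ (k - m))"
      using assms by (intro divide_left_mono mult_left_mono mult_pos_pos) auto
  qed
  then show ?thesis
    unfolding qdenom_def using assms
    by (intro mult_mono add_right_mono mult_nonneg_nonneg add_nonneg_nonneg sum_nonneg) auto
qed

lemma qform_pos:
  assumes "k \<ge> 1" "mu > 0" "lam > 0" "s \<ge> 0" "a > 0" "a * lam < real k * mu"
  shows "qform k mu s lam a > 0"
proof -
  have "qdenom k (a * lam / mu) > 0"
    using assms by (intro qdenom_pos) (simp_all add: field_simps)
  then show ?thesis
    using assms qform_eq_div_qdenom[of k mu lam a s] by (simp add: add_nonneg_pos)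
qed

lemma qform_mono:
  assumes "k \<ge> 1" "mu > 0" "lam > 0" "s \<ge> 0" "0 \<le> a" "a \<le> b" "b * lam < real k * mu"
  shows "qform k mu s lam a \<le> qform k mu s lam b"
proof (cases "a = 0")
  case True
  then show ?thesis
    using assms qform_pos[of k mu lam s b] by (cases "b = 0") (auto simp: qform_def)
next
  case False
  have "a * lam \<le> b * lam"
    using assms by (simp add: mult_right_mono)
  then have a: "a > 0" "a * lam < real k * mu"
    using assms False by linarith+
  have "qform k mu s lam a = mu * (s + 1 / mu^2) / (2 * qdenom k (a * lam / mu))"
    using assms a by (intro qform_eq_div_qdenom) auto
  also have "\<dots> \<le> mu * (s + 1 / mu^2) / (2 * qdenom k (b * lam / mu))"
  proof -
    have "a * lam / mu \<le> b * lam / mu"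
      using assms by (simp add: divide_right_mono mult_right_mono)
    then have "qdenom k (b * lam / mu) \<le> qdenom k (a * lam / mu)"
        "qdenom k (b * lam / mu) > 0"
      using assms a by (auto intro!: qdenom_antimono qdenom_pos simp: field_simps)
    then show ?thesis
      using assms by (intro divide_left_mono) (auto simp: add_nonneg_pos)
  qed
  also have "\<dots> = qform k mu s lam b"
    using assms a by (intro qform_eq_div_qdenom[symmetric]) auto
  finally show ?thesis .
qed

lemma set_integral_nonneg:
  fixes f :: "'a \<Rightarrow> real"
  assumes "\<And>x. x \<in> A \<Longrightarrow> 0 \<le> f x"
  shows "0 \<le> (LINT x:A|M. f x)"
  unfolding set_lebesgue_integral_def
  using assms by (intro integral_nonneg_AE AE_I2) (simp add: indicator_def)

lemma set_integral_one_minus: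
  fixes f :: "'a \<Rightarrow> real"
  assumes "A \<in> sets M" "emeasure M A < \<infinity>" "set_integrable M A f"
  shows "set_integrable M A (\<lambda>x. 1 - f x)"
    and "(LINT x:A|M. 1 - f x) = measure M A - (LINT x:A|M. f x)"
proof -
  have one: "set_integrable M A (\<lambda>_. 1::real)"
    using assms(1,2) by (simp add: set_integrable_def)
  show "set_integrable M A (\<lambda>x. 1 - f x)"
    using one assms(3) by (rule set_integral_diff)
  show "(LINT x:A|M. 1 - f x) = measure M A - (LINT x:A|M. f x)"
    using set_integral_diff(2)[OF one assms(3)] assms(1,2) by (simp add: set_integral_const)
qed

lemma set_integral_nonneg_eq_0_AE:
  fixes f :: "'a \<Rightarrow> real"
  assumes "set_integrable M A f" "\<And>x. x \<in> A \<Longrightarrow> 0 \<le> f x" "(LINT x:A|M. f x) = 0"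
  shows "AE x in M. x \<in> A \<longrightarrow> f x = 0"
proof -
  have "AE x in M. indicator A x * f x = 0"
    using assms integral_nonneg_eq_0_iff_AE[of M "\<lambda>x. indicator A x * f x"]
    unfolding set_integrable_def set_lebesgue_integral_def
    by (auto simp: indicator_def)
  then show ?thesis
    by eventually_elim (auto simp: indicator_def)
qed

lemma best_mixed_response_eq_0:
  fixes u1 u2 om :: real
  assumes "\<forall>w\<in>{0..1}. ereal w * ereal u1 + ereal (1 - w) * ereal u2
      \<le> ereal om * ereal u1 + ereal (1 - om) * ereal u2"
    and "0 \<le> om" "u1 < u2"
  shows "om = 0"
proof -
  have "u2 \<le> om * u1 + (1 - om) * u2"
    using assms(1)[rule_format, of 0] by simp
  then have "om * (u2 - u1) \<le> 0"
    by (simp add: algebra_simps)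
  then show ?thesis
    using assms(2,3) by (simp add: mult_le_0_iff)
qed

lemma payoff_lt_if_price_gap:
  fixes kl kq :: real
  assumes "kl \<ge> 0" "kq > 0" "q1 > 0" "q2 \<le> Q2"
    and "kq * Q2 + kl * \<bar>x2 - x1\<bar> \<le> kp * d * (p1 - p2)"
  shows "- kl * \<bar>x - x1\<bar> - kp * d * p1 - kq * q1 < - kl * \<bar>x - x2\<bar> - kp * d * p2 - kq * q2"
proof -
  have "kl * \<bar>x - x2\<bar> - kl * \<bar>x - x1\<bar> \<le> kl * \<bar>x2 - x1\<bar>"
    using assms(1) mult_left_mono[of "\<bar>x - x2\<bar> - \<bar>x - x1\<bar>" "\<bar>x2 - x1\<bar>" kl]
    by (simp add: right_diff_distrib)
  moreover have "kq * q2 \<le> kq * Q2" "kq * q1 > 0"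
    using assms(2-4) by simp_all
  ultimately show ?thesis
    using assms(5) by (simp add: right_diff_distrib)
qed

lemma is_NE_swap_stations:
  assumes "L \<ge> 0" and NE: "is_NE L lam x1 x2 k1 mu1 s1 p1 k2 mu2 s2 p2 kl kq kp d \<omega>"
  shows "is_NE L lam x2 x1 k2 mu2 s2 p2 k1 mu1 s1 p1 kl kq kp d (\<lambda>x. 1 - \<omega> x)"
proof -
  let ?S = "{-L..L}"
  define a1 where "a1 = (LINT x:?S|lborel. \<omega> x)"
  have int: "set_integrable lborel ?S \<omega>" using NE by (simp add: is_NE_def)
  have fin: "emeasure lborel ?S < \<infinity>" using assms(1) by simp
  have load2: "(LINT x:?S|lborel. 1 - \<omega> x) = 2 * L - a1"
    using set_integral_one_minus(2)[OF _ fin int] assms(1) by (simp add: a1_def)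
  define U1 where "U1 x = payoff kl kq kp d x1 (qwait k1 mu1 s1 lam a1) p1 x" for x
  define U2 where "U2 x = payoff kl kq kp d x2 (qwait k2 mu2 s2 lam (2 * L - a1)) p2 x" for x
  have opt: "\<forall>x\<in>?S. 0 \<le> \<omega> x \<and> \<omega> x \<le> 1 \<and> (\<forall>w\<in>{0..1}.
      ereal w * U1 x + ereal (1 - w) * U2 x \<le> ereal (\<omega> x) * U1 x + ereal (1 - \<omega> x) * U2 x)"
    using NE by (simp add: is_NE_def Let_def a1_def U1_def U2_def)
  have "\<forall>x\<in>?S. 0 \<le> 1 - \<omega> x \<and> 1 - \<omega> x \<le> 1 \<and> (\<forall>w\<in>{0..1}.
      ereal w * U2 x + ereal (1 - w) * U1 x \<le> ereal (1 - \<omega> x) * U2 x + ereal (1 - (1 - \<omega> x)) * U1 x)"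
  proof (intro ballI conjI)
    fix x w :: real
    assume x: "x \<in> ?S" and w: "w \<in> {0..1}"
    then have "1 - w \<in> {0..1}" by simp
    with opt x have "ereal (1 - w) * U1 x + ereal (1 - (1 - w)) * U2 x
        \<le> ereal (\<omega> x) * U1 x + ereal (1 - \<omega> x) * U2 x"
      by blast
    then show "ereal w * U2 x + ereal (1 - w) * U1 x
        \<le> ereal (1 - \<omega> x) * U2 x + ereal (1 - (1 - \<omega> x)) * U1 x"
      by (simp add: add.commute)
  qed (use opt in auto)
  then show ?thesis
    using set_integral_one_minus(1)[OF _ fin int]
    by (simp add: is_NE_def Let_def load2 U1_def U2_def)
qed

lemma is_NE_load_bounds:
  assumes "L \<ge> 0" and NE: "is_NE L lam x1 x2 k1 mu1 s1 p1 k2 mu2 s2 p2 kl kq kp d \<omega>"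
  shows "0 \<le> (LINT x:{-L..L}|lborel. \<omega> x)" "(LINT x:{-L..L}|lborel. \<omega> x) \<le> 2 * L"
proof -
  have int: "set_integrable lborel {-L..L} \<omega>" and unit: "\<forall>x\<in>{-L..L}. 0 \<le> \<omega> x \<and> \<omega> x \<le> 1"
    using NE by (simp_all add: is_NE_def Let_def)
  then show "0 \<le> (LINT x:{-L..L}|lborel. \<omega> x)"
    by (intro set_integral_nonneg) auto
  have "0 \<le> (LINT x:{-L..L}|lborel. 1 - \<omega> x)"
    using unit by (intro set_integral_nonneg) auto
  also have "\<dots> = 2 * L - (LINT x:{-L..L}|lborel. \<omega> x)"
    using int assms(1) by (subst set_integral_one_minus(2)) auto
  finally show "(LINT x:{-L..L}|lborel. \<omega> x) \<le> 2 * L"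
    by simp
qed

lemma is_NE_full_abandons_station1:
  assumes "L > 0" "lam > 0" "kl \<ge> 0" "kq > 0"
    and "k1 \<ge> 1" "mu1 > 0" "s1 \<ge> 0" "k2 \<ge> 1" "mu2 > 0" "s2 \<ge> 0"
    and full1: "2 * L * lam < real k1 * mu1" and full2: "2 * L * lam < real k2 * mu2"
    and price: "kq * qform k2 mu2 s2 lam (2 * L) + kl * \<bar>x2 - x1\<bar> \<le> kp * d * (p1 - p2)"
    and NE: "is_NE L lam x1 x2 k1 mu1 s1 p1 k2 mu2 s2 p2 kl kq kp d \<omega>"
  shows "AE x in lborel. x \<in> {-L..L} \<longrightarrow> \<omega> x = 0"
proof -
  define a1 where "a1 = (LINT x:{-L..L}|lborel. \<omega> x)"
  define q1 where "q1 = qform k1 mu1 s1 lam a1"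
  define q2 where "q2 = qform k2 mu2 s2 lam (2 * L - a1)"
  define u1 where "u1 x = - kl * \<bar>x - x1\<bar> - kp * d * p1 - kq * q1" for x
  define u2 where "u2 x = - kl * \<bar>x - x2\<bar> - kp * d * p2 - kq * q2" for x
  have a1: "0 \<le> a1" "a1 \<le> 2 * L"
    using is_NE_load_bounds[OF _ NE] assms(1) by (simp_all add: a1_def)
  then have "a1 * lam \<le> 2 * L * lam" "(2 * L - a1) * lam \<le> 2 * L * lam"
    using assms(2) by (simp_all add: mult_right_mono)
  then have loads: "a1 * lam < real k1 * mu1" "(2 * L - a1) * lam < real k2 * mu2"
    using full1 full2 by linarith+
  then have finite_wait: "qwait k1 mu1 s1 lam a1 = ereal q1"
      "qwait k2 mu2 s2 lam (2 * L - a1) = ereal q2"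
    using assms(2) by (simp_all add: qwait_def q1_def q2_def pos_less_divide_eq)
  have int: "set_integrable lborel {-L..L} \<omega>"
    and opt: "\<forall>x\<in>{-L..L}. 0 \<le> \<omega> x \<and> (\<forall>w\<in>{0..1}.
      ereal w * ereal (u1 x) + ereal (1 - w) * ereal (u2 x)
      \<le> ereal (\<omega> x) * ereal (u1 x) + ereal (1 - \<omega> x) * ereal (u2 x))"
    using NE by (simp_all add: is_NE_def Let_def a1_def[symmetric] finite_wait payoff_def u1_def u2_def)
  have "a1 = 0"
  proof (rule ccontr)
    assume "a1 \<noteq> 0"
    then have q1: "q1 > 0"
      unfolding q1_def using assms a1 loads by (intro qform_pos) auto
    have q2: "q2 \<le> qform k2 mu2 s2 lam (2 * L)"
      unfolding q2_def using assms a1 full2 by (intro qform_mono) auto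
    have "u1 x < u2 x" for x
      unfolding u1_def u2_def using assms(3,4) q1 q2 price by (rule payoff_lt_if_price_gap)
    then have "\<forall>x\<in>{-L..L}. \<omega> x = 0"
      using opt best_mixed_response_eq_0 by blast
    then have "a1 = (LINT x:{-L..L}|lborel. 0)"
      unfolding a1_def by (intro set_lebesgue_integral_cong) auto
    then have "a1 = 0"
      by simp
    with \<open>a1 \<noteq> 0\<close> show False ..
  qed
  then show ?thesis
    using int opt by (intro set_integral_nonneg_eq_0_AE) (auto simp: a1_def)
qed

theorem theorem3:
  fixes L lam x1 x2 mu1 mu2 s1 s2 p1 p2 pmin pmax kl kq kp d :: real
    and k1 k2 :: nat
  assumes "L > 0" and "-L < x1" and "x1 < x2" and "x2 < L"
    and "k1 \<ge> 1" and "k2 \<ge> 1" and "mu1 > 0" and "mu2 > 0"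
    and "s1 \<ge> 0" and "s2 \<ge> 0" and "lam > 0"
    and "kl > 0" and "kq > 0" and "kp > 0" and "d > 0"
    and "p1 \<in> {pmin..pmax}" and "p2 \<in> {pmin..pmax}"
    and full1: "real k1 * mu1 > 2 * L * lam" and full2: "real k2 * mu2 > 2 * L * lam"
  shows
    "(p1 - p2 \<in> {(kq * qform k2 mu2 s2 lam (2 * L) + kl * (x2 - x1)) / (kp * d) .. pmax - pmin} \<longrightarrow>
        (\<forall>\<omega>. is_NE L lam x1 x2 k1 mu1 s1 p1 k2 mu2 s2 p2 kl kq kp d \<omega> \<longrightarrow>
              (AE x in lborel. x \<in> {-L..L} \<longrightarrow> \<omega> x = 0)))
     \<and>
     (p1 - p2 \<in> {pmin - pmax .. - (kq * qform k1 mu1 s1 lam (2 * L) + kl * (x2 - x1)) / (kp * d)} \<longrightarrow>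
        (\<forall>\<omega>. is_NE L lam x1 x2 k1 mu1 s1 p1 k2 mu2 s2 p2 kl kq kp d \<omega> \<longrightarrow>
              (AE x in lborel. x \<in> {-L..L} \<longrightarrow> \<omega> x = 1)))"
proof -
  have kpd: "kp * d > 0" and dist: "\<bar>x2 - x1\<bar> = x2 - x1" "\<bar>x1 - x2\<bar> = x2 - x1"
    using assms by auto
  have station2: "AE x in lborel. x \<in> {-L..L} \<longrightarrow> \<omega> x = 0"
    if gap: "(kq * qform k2 mu2 s2 lam (2 * L) + kl * (x2 - x1)) / (kp * d) \<le> p1 - p2"
      and NE: "is_NE L lam x1 x2 k1 mu1 s1 p1 k2 mu2 s2 p2 kl kq kp d \<omega>" for \<omega>
  proof (rule is_NE_full_abandons_station1[OF _ _ _ _ _ _ _ _ _ _ _ _ _ NE])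
    show "kq * qform k2 mu2 s2 lam (2 * L) + kl * \<bar>x2 - x1\<bar> \<le> kp * d * (p1 - p2)"
      using gap kpd by (simp add: dist pos_divide_le_eq mult.commute)
  qed (use assms in auto)
  have station1: "AE x in lborel. x \<in> {-L..L} \<longrightarrow> \<omega> x = 1"
    if gap: "p1 - p2 \<le> - (kq * qform k1 mu1 s1 lam (2 * L) + kl * (x2 - x1)) / (kp * d)"
      and NE: "is_NE L lam x1 x2 k1 mu1 s1 p1 k2 mu2 s2 p2 kl kq kp d \<omega>" for \<omega>
  proof -
    have "(p1 - p2) * (kp * d) \<le> - (kq * qform k1 mu1 s1 lam (2 * L) + kl * (x2 - x1))"
      using gap kpd by (simp only: pos_le_divide_eq)
    then have price: "kq * qform k1 mu1 s1 lam (2 * L) + kl * \<bar>x1 - x2\<bar> \<le> kp * d * (p2 - p1)"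
      by (simp add: dist algebra_simps)
    have "AE x in lborel. x \<in> {-L..L} \<longrightarrow> 1 - \<omega> x = 0"
      by (rule is_NE_full_abandons_station1[OF _ _ _ _ _ _ _ _ _ _ _ _ price
            is_NE_swap_stations[OF _ NE]]) (use assms in auto)
    then show ?thesis
      by eventually_elim auto
  qed
  show ?thesis
    using station1 station2 by auto
qed

end
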